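(* Fix a finite set of docking points $Q=\{q_1,\dots,q_J\}\subset\partial D$ together with a cyclic order of visitation. If some gap angle of $Q$ is greater than $\pi$, then there is a $\mathbf W_d$-minimizing embedded monotone cycle in $D$ (rel $Q$) having winding number zero about the puncture. Conversely, if no gap angle is greater than $\pi$, then there is a $\mathbf W_d$-minimizing embedded cycle in $D$ (rel $Q$) of winding number $\pm 1$.
   Context: The Y-graph $\Upsilon$ has central vertex $v_0$, outer vertices $v_1,v_2,v_3$ and edges $e_i$ from $v_0$ to $v_i$ identified with $[0,1]$ ($0$ at $v_0$); write $x=|x|e_{\iota(x)}$ with edge index $\iota(x)$ (undefined at $v_0$ and then counted as different from every index). $\mathcal C=\{(x,y)\in\Upsilon\times\Upsilon:x\ne y\}$ and $D=\{(x,y)\in\mathcal C:\iota(x)\ne\iota(y)\}$. $D$ is the union of six punctured squares $\{(x,y):\iota(x)=i,\iota(y)=j\}\cong[0,1]^2\setminus\{(0,0)\}$, $i\ne j$, glued cyclically along the segments where $|x|=0$ or $|y|=0$; rescaling each square's quadrant angle by $2/3$ gives a homeomorphism of $D$ with the punctured closed unit disc $\{(r,\theta):0<r\le1\}$ in which the six branch segments $\{|x|=0\}\cup\{|y|=0\}$ (where an AGV occupies $v_0$) are the radial lines at angles $\theta\in\Theta=\{n\pi/3:n\in\mathbb Z\}$, the puncture corresponds to $(v_0,v_0)$, and $\partial D=\{|x|=1\text{ or }|y|=1\}$ is the unit circle. Given $Q=\{q_1,\dots,q_J\}\subset\partial D$ indexed in the order of visitation, the gap angles are $ga_j=\theta(q_{j+1})-\theta(q_j)\in(0,2\pi)$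 (indices mod $J$), differences taken with respect to the orientation of $\partial D$, so that $\sum_j ga_j=2\pi$. A cycle rel $Q$ is a closed curve in $D$ visiting the points of $Q$ in the given cyclic order; it is monotone if it visits $Q$ in the cyclic order of $\partial D$. The cost $\mathbf W_d(\gamma)$ of a curve is its number of intersections with the branch set $\{|x|=0\}\cup\{|y|=0\}$, i.e., the number of times an AGV occupies the central vertex; $\gamma$ is $\mathbf W_d$-minimizing if its cost is minimal among such cycles rel $Q$. Winding number is taken about the puncture; for embedded cycles it is $-1$, $0$ or $1$. *)

theory Defs
  imports "HOL-Complex_Analysis.Complex_Analysis" "HOL-Library.Extended_Nat"
begin

text \<open>Model of the configuration space D (via the homeomorphism described in the
paper): the punctured closed unit disc in the complex plane. The puncture 0
corresponds to (v0,v0), the unit circle is the boundary of D.\<close>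

definition DD :: "complex set" where
  "DD = {z. 0 < cmod z \<and> cmod z \<le> 1}"

text \<open>Branch set: the six radial segments at angles n*pi/3 (an AGV occupies v0).\<close>
definition branch :: "complex set" where
  "branch = {z \<in> DD. \<exists>n::int. \<exists>r::real. r > 0 \<and> z = of_real r * cis (of_int n * pi / 3)}"

definition ccw_angle :: "complex \<Rightarrow> complex \<Rightarrow> real" where
  "ccw_angle a b = (let d = Arg b - Arg a in if d \<le> 0 then d + 2 * pi else d)"

definition gap_angle :: "(nat \<Rightarrow> complex) \<Rightarrow> nat \<Rightarrow> nat \<Rightarrow> real" where
  "gap_angle q J j = ccw_angle (q j) (q (Suc j mod J))"

text \<open>Closed curves are continuous maps from the unit circle into D;
the associated path on [0,1] is t \<mapsto> c (cis (2 pi t)).\<close>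
definition loop_path :: "(complex \<Rightarrow> complex) \<Rightarrow> real \<Rightarrow> complex" where
  "loop_path c t = c (cis (2 * pi * t))"

definition cycle_rel :: "(nat \<Rightarrow> complex) \<Rightarrow> nat \<Rightarrow> (complex \<Rightarrow> complex) \<Rightarrow> bool" where
  "cycle_rel q J c \<longleftrightarrow>
     continuous_on (sphere 0 1) c \<and> c ` sphere 0 1 \<subseteq> DD \<and>
     (\<exists>t::nat \<Rightarrow> real. (\<forall>j<J. 0 \<le> t j \<and> t j < 1 \<and> loop_path c (t j) = q j) \<and>
                        (\<forall>i j. i < j \<and> j < J \<longrightarrow> t i < t j))"

text \<open>The visitation order agrees with the (counter-clockwise) cyclic order of the boundary.\<close>
definition ccw_order :: "(nat \<Rightarrow> complex) \<Rightarrow> nat \<Rightarrow> bool" where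
  "ccw_order q J \<longleftrightarrow> (\<Sum>j<J. gap_angle q J j) = 2 * pi"

definition monotone_cycle :: "(nat \<Rightarrow> complex) \<Rightarrow> nat \<Rightarrow> (complex \<Rightarrow> complex) \<Rightarrow> bool" where
  "monotone_cycle q J c \<longleftrightarrow> cycle_rel q J c \<and> ccw_order q J"

definition embedded :: "(complex \<Rightarrow> complex) \<Rightarrow> bool" where
  "embedded c \<longleftrightarrow> inj_on c (sphere 0 1)"

definition Wd :: "(complex \<Rightarrow> complex) \<Rightarrow> enat" where
  "Wd c = (let S = {z \<in> sphere 0 1. c z \<in> branch} in if finite S then enat (card S) else \<infinity>)"

definition Wd_minimizing :: "(nat \<Rightarrow> complex) \<Rightarrow> nat \<Rightarrow> (complex \<Rightarrow> complex) \<Rightarrow> bool" where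
  "Wd_minimizing q J c \<longleftrightarrow> cycle_rel q J c \<and> (\<forall>c'. cycle_rel q J c' \<longrightarrow> Wd c \<le> Wd c')"

definition winding :: "(complex \<Rightarrow> complex) \<Rightarrow> complex" where
  "winding c = winding_number (loop_path c) 0"

end

theory Submission
  imports Defs
begin

(* A cycle that meets all six rays of the branch set costs at least 6. Otherwise its angle has
   a continuous lift theta with theta 0 = theta 1. If the angles of the docking points fill
   [lo, hi], the intermediate value theorem makes theta cross every ray angle of [lo, hi] on the
   way from lo to hi and every ray angle of (lo, hi) on the way back; this "sweep cost" of
   [lo, hi] is at least 6 when hi - lo >= pi. If hi - lo < pi, the gap following the point of
   maximal angle exceeds pi and [lo, hi] contains the arc complementary to it.
   Conversely, if no gap exceeds pi, the unit circle itself (winding number 1) costs 6. If some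
   gap exceeds pi, it is the only one, and a thin lens hugging the complementary arc lies in an
   open half plane (winding number 0) and costs at most the sweep cost of that arc, which is at
   most 6. *)

lemma cis_eq_cisD:
  assumes "cis a = cis b"
  shows "\<exists>n::int. a = b + 2 * pi * of_int n"
  using assms sin_cos_eq_iff[of a b] by (simp add: complex_eq_iff)

lemma cis_eq_cis_imp_eq:
  assumes "cis a = cis b" and "\<bar>a - b\<bar> < 2 * pi"
  shows "a = b"
proof -
  obtain n :: int where n: "a = b + 2 * pi * of_int n"
    using cis_eq_cisD[OF assms(1)] by blast
  with assms(2) have "\<bar>of_int n\<bar> < (1::real)"
    by (simp add: abs_mult)
  then have "n = 0" by linarith
  with n show ?thesis by simp
qed

lemma cis_2pi_frac: "cis (2 * pi * frac x) = cis (2 * pi * x)"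
proof -
  have "2 * pi * x = 2 * pi * frac x + 2 * pi * of_int \<lfloor>x\<rfloor>" by (simp add: frac_def algebra_simps)
  then show ?thesis by (simp add: cis_mult[symmetric])
qed

lemma inj_on_cis_2pi: "inj_on (\<lambda>t. cis (2 * pi * t)) {0..<1}"
proof (rule inj_onI)
  fix s t :: real
  assume "s \<in> {0..<1}" "t \<in> {0..<1}" and eq: "cis (2 * pi * s) = cis (2 * pi * t)"
  then have "\<bar>s - t\<bar> < 1" by auto
  then have "\<bar>2 * pi * s - 2 * pi * t\<bar> < 2 * pi"
    by (simp add: abs_mult flip: right_diff_distrib)
  with eq show "s = t" by (auto dest: cis_eq_cis_imp_eq)
qed

lemma cis_Arg_unit:
  assumes "cmod z = 1"
  shows "cis (Arg z) = z"
proof -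
  have "z \<noteq> 0" using assms by auto
  then show ?thesis using assms cis_Arg[of z] by (simp add: sgn_div_norm)
qed

lemma sgn_rcis: "0 < r \<Longrightarrow> sgn (rcis r a) = cis a"
  by (simp add: rcis_def sgn_mult sgn_of_real)

lemma frac_eq_if_small:
  assumes "-1 \<le> x" and "x < 1"
  shows "frac x = (if 0 \<le> x then x else x + 1)"
proof (cases "0 \<le> x")
  case True
  with assms show ?thesis by (simp add: frac_eq)
next
  case False
  then have "frac (x + 1) = x + 1" using assms by (simp add: frac_eq)
  with False show ?thesis by (simp add: frac_1_eq)
qed

lemma unit_complex_Re_Im_bounds:
  assumes "cmod w = 1"
  shows "(Re w)\<^sup>2 + (Im w)\<^sup>2 = 1" "\<bar>Re w\<bar> \<le> 1" "\<bar>Im w\<bar> \<le> 1"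
  using assms abs_Re_le_cmod[of w] abs_Im_le_cmod[of w] cmod_power2[of w] by auto

lemma unit_complex_eqI:
  assumes "cmod w1 = 1" "cmod w2 = 1" "Re w1 = Re w2" "0 \<le> Im w1 * Im w2"
  shows "w1 = w2"
proof -
  have "(Im w1)\<^sup>2 = (Im w2)\<^sup>2"
    using unit_complex_Re_Im_bounds(1)[OF assms(1)] unit_complex_Re_Im_bounds(1)[OF assms(2)] assms(3)
    by simp
  then have "Im w1 = Im w2 \<or> Im w1 = - Im w2" by (simp add: power2_eq_iff)
  with assms(4) have "Im w1 = Im w2" by (auto simp: mult_le_0_iff)
  with assms(3) show ?thesis by (simp add: complex_eq_iff)
qed

lemma IVT_between:
  fixes f :: "real \<Rightarrow> real"
  assumes "continuous_on {a..b} f" and "a \<le> b"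
    and "min (f a) (f b) \<le> y" and "y \<le> max (f a) (f b)"
  shows "\<exists>x\<in>{a..b}. f x = y"
proof (cases "f a \<le> f b")
  case True
  with assms show ?thesis using IVT'[of f a y b] by auto
next
  case False
  with assms show ?thesis using IVT2'[of f b y a] by auto
qed

section \<open>Ray angles and the sweep cost\<close>

definition ray_angles :: "real set" where
  "ray_angles = range (\<lambda>n::int. of_int n * pi / 3)"

lemma ray_angles_add_2pi:
  assumes "a \<in> ray_angles"
  shows "a + 2 * pi * of_int m \<in> ray_angles"
proof -
  obtain n :: int where "a = of_int n * pi / 3" using assms by (auto simp: ray_angles_def)
  then have "a + 2 * pi * of_int m = of_int (n + 6 * m) * pi / 3" by (simp add: field_simps)
  then show ?thesis unfolding ray_angles_def by (rule range_eqI)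
qed

lemma mem_branch_iff:
  assumes "z \<in> DD" and "0 < r" and z: "z = of_real r * cis a"
  shows "z \<in> branch \<longleftrightarrow> a \<in> ray_angles"
proof
  assume "z \<in> branch"
  then obtain n :: int and r' where "0 < r'" and z': "z = of_real r' * cis (of_int n * pi / 3)"
    by (auto simp: branch_def)
  have "r' = r" using arg_cong[OF z', of cmod] \<open>0 < r\<close> \<open>0 < r'\<close> by (simp add: z norm_mult)
  with z z' \<open>0 < r\<close> have "cis a = cis (of_int n * pi / 3)" by simp
  then obtain m :: int where "a = of_int n * pi / 3 + 2 * pi * of_int m"
    using cis_eq_cisD by blast
  then show "a \<in> ray_angles" using ray_angles_add_2pi by (auto simp: ray_angles_def)
next
  assume "a \<in> ray_angles"
  then show "z \<in> branch" using assms by (auto simp: branch_def ray_angles_def)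
qed

(* A closed path whose angle sweeps from u to v and back meets each ray angle in [u, v] on the
   way out and each one in (u, v) on the way back. *)
definition sweep_cost :: "real \<Rightarrow> real \<Rightarrow> nat" where
  "sweep_cost u v = card ({u..v} \<inter> ray_angles) + card ({u<..<v} \<inter> ray_angles)"

lemma ray_angles_inter_Icc:
  "{u..v} \<inter> ray_angles = (\<lambda>n. of_int n * pi / 3) ` {\<lceil>3 * u / pi\<rceil>..\<lfloor>3 * v / pi\<rfloor>}"
proof -
  have "u \<le> of_int n * pi / 3 \<and> of_int n * pi / 3 \<le> v \<longleftrightarrow> n \<in> {\<lceil>3 * u / pi\<rceil>..\<lfloor>3 * v / pi\<rfloor>}" for n
    by (simp add: ceiling_le_iff le_floor_iff field_simps)
  then show ?thesis by (auto simp: ray_angles_def)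
qed

lemma ray_angles_inter_Ioo:
  "{u<..<v} \<inter> ray_angles = (\<lambda>n. of_int n * pi / 3) ` {\<lfloor>3 * u / pi\<rfloor> + 1..\<lceil>3 * v / pi\<rceil> - 1}"
proof -
  have "u < of_int n * pi / 3 \<longleftrightarrow> \<lfloor>3 * u / pi\<rfloor> < n" for n
    by (simp add: floor_less_iff field_simps)
  moreover have "of_int n * pi / 3 < v \<longleftrightarrow> n < \<lceil>3 * v / pi\<rceil>" for n
    by (simp add: less_ceiling_iff field_simps)
  ultimately show ?thesis by (auto simp: ray_angles_def)
qed

lemma finite_ray_angles_inter:
  "finite ({u..v} \<inter> ray_angles)" "finite ({u<..<v} \<inter> ray_angles)"
  unfolding ray_angles_inter_Icc ray_angles_inter_Ioo by simp_all

lemma sweep_cost_eq: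
  "sweep_cost u v = nat (\<lfloor>3 * v / pi\<rfloor> - \<lceil>3 * u / pi\<rceil> + 1) + nat (\<lceil>3 * v / pi\<rceil> - \<lfloor>3 * u / pi\<rfloor> - 1)"
proof -
  have "inj (\<lambda>n::int. of_int n * pi / 3)" by (rule injI) simp
  then show ?thesis
    unfolding sweep_cost_def ray_angles_inter_Icc ray_angles_inter_Ioo
    by (simp add: card_image inj_on_subset)
qed

lemma sweep_cost_ge_6:
  assumes "pi \<le> v - u"
  shows "6 \<le> sweep_cost u v"
proof -
  have "3 * v / pi = 3 * u / pi + 3 * ((v - u) / pi)" by (simp add: field_simps)
  moreover have "1 \<le> (v - u) / pi" using assms by simp
  ultimately have "3 * u / pi + 3 \<le> 3 * v / pi" by linarith
  then have "\<lfloor>3 * u / pi\<rfloor> + 3 \<le> \<lfloor>3 * v / pi\<rfloor>" "\<lceil>3 * u / pi\<rceil> + 3 \<le> \<lceil>3 * v / pi\<rceil>"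
    by (metis floor_add_int floor_mono of_int_numeral, metis ceiling_add_of_int ceiling_mono of_int_numeral)
  moreover have "\<lceil>3 * u / pi\<rceil> \<le> \<lfloor>3 * u / pi\<rfloor> + 1" by linarith
  ultimately show ?thesis unfolding sweep_cost_eq by linarith
qed

lemma sweep_cost_le_6:
  assumes "v - u < pi"
  shows "sweep_cost u v \<le> 6"
proof -
  have "3 * v / pi = 3 * u / pi + 3 * ((v - u) / pi)" by (simp add: field_simps)
  moreover have "(v - u) / pi < 1" using assms by simp
  ultimately have "3 * v / pi < 3 * u / pi + 3" by linarith
  then have "\<lfloor>3 * v / pi\<rfloor> \<le> \<lceil>3 * u / pi\<rceil> + 2" "\<lceil>3 * v / pi\<rceil> \<le> \<lfloor>3 * u / pi\<rfloor> + 4"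
    by linarith+
  then show ?thesis unfolding sweep_cost_eq by linarith
qed

lemma sweep_cost_antimono:
  assumes "u \<le> u'"
  shows "sweep_cost u' v \<le> sweep_cost u v"
proof -
  have "3 * u / pi \<le> 3 * u' / pi" using assms by (simp add: divide_right_mono)
  then have "\<lceil>3 * u / pi\<rceil> \<le> \<lceil>3 * u' / pi\<rceil>" "\<lfloor>3 * u / pi\<rfloor> \<le> \<lfloor>3 * u' / pi\<rfloor>"
    by (simp_all add: ceiling_mono floor_mono)
  then show ?thesis unfolding sweep_cost_eq by linarith
qed

lemma sweep_cost_shift:
  "sweep_cost (u + 2 * pi * of_int m) (v + 2 * pi * of_int m) = sweep_cost u v"
proof -
  have shift: "3 * (x + 2 * pi * of_int m) / pi = 3 * x / pi + of_int (6 * m)" for x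
    by (simp add: field_simps)
  show ?thesis
    unfolding sweep_cost_eq shift floor_add_int[symmetric] ceiling_add_of_int by simp
qed

lemma closed_curve_returns:
  fixes \<theta> :: "real \<Rightarrow> real"
  assumes cont: "continuous_on {0..1} \<theta>" and closed: "\<theta> 0 = \<theta> 1"
    and t1: "0 \<le> t1" and t12: "t1 \<le> t2" and t2: "t2 < 1"
    and ends: "{\<theta> t1, \<theta> t2} = {u, v}" and y: "u < y" "y < v"
  shows "\<exists>t \<in> {0..<1} - {t1..t2}. \<theta> t = y"
proof (cases "y = \<theta> 0")
  case True
  then have "0 < t1" using t1 y ends by (cases "t1 = 0") (auto simp: doubleton_eq_iff)
  with True show ?thesis by force
next
  case False
  have cont_on: "continuous_on {a..b} \<theta>" if "0 \<le> a" "b \<le> 1" for a b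
    using cont by (rule continuous_on_subset) (use that in auto)
  have "\<theta> t1 \<noteq> y" "\<theta> t2 \<noteq> y" using ends y by (auto simp: doubleton_eq_iff)
  have "min (\<theta> 0) (\<theta> t1) \<le> y \<and> y \<le> max (\<theta> 0) (\<theta> t1) \<or>
        min (\<theta> t2) (\<theta> 1) \<le> y \<and> y \<le> max (\<theta> t2) (\<theta> 1)"
    using y ends closed by (cases "\<theta> 0 \<le> y") (auto simp: doubleton_eq_iff min_def max_def)
  then show ?thesis
  proof
    assume "min (\<theta> 0) (\<theta> t1) \<le> y \<and> y \<le> max (\<theta> 0) (\<theta> t1)"
    then obtain t where "t \<in> {0..t1}" "\<theta> t = y"
      using IVT_between[OF cont_on t1] t12 t2 by fastforce
    with \<open>\<theta> t1 \<noteq> y\<close> t12 t2 show ?thesis by (intro bexI[of _ t]) auto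
  next
    assume "min (\<theta> t2) (\<theta> 1) \<le> y \<and> y \<le> max (\<theta> t2) (\<theta> 1)"
    then obtain t where t: "t \<in> {t2..1}" "\<theta> t = y"
      using IVT_between[of t2 1 \<theta> y] cont_on[of t2 1] t1 t12 t2 by fastforce
    moreover have "t \<noteq> 1" using t False closed by auto
    ultimately show ?thesis using \<open>\<theta> t2 \<noteq> y\<close> t1 t12 by (intro bexI[of _ t]) auto
  qed
qed

lemma closed_curve_level_crossings:
  fixes \<theta> :: "real \<Rightarrow> real" and L :: "real set"
  assumes cont: "continuous_on {0..1} \<theta>" and closed: "\<theta> 0 = \<theta> 1"
    and t1: "0 \<le> t1" and t12: "t1 \<le> t2" and t2: "t2 < 1"
    and ends: "{\<theta> t1, \<theta> t2} = {u, v}" and "u \<le> v"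
    and fin: "finite {t \<in> {0..<1}. \<theta> t \<in> L}"
  shows "card ({u..v} \<inter> L) + card ({u<..<v} \<inter> L) \<le> card {t \<in> {0..<1}. \<theta> t \<in> L}"
proof -
  define S where "S = {t \<in> {0..<1}. \<theta> t \<in> L}"
  define S1 where "S1 = S \<inter> {t1..t2}"
  define S2 where "S2 = S - {t1..t2}"
  have "continuous_on {t1..t2} \<theta>" using cont by (rule continuous_on_subset) (use t1 t2 in auto)
  then have "{u..v} \<inter> L \<subseteq> \<theta> ` S1"
    using IVT_between[OF _ t12] ends \<open>u \<le> v\<close> t1 t2
    by (fastforce simp: S1_def S_def doubleton_eq_iff)
  moreover have "{u<..<v} \<inter> L \<subseteq> \<theta> ` S2"
    using closed_curve_returns[OF cont closed t1 t12 t2 ends] by (fastforce simp: S2_def S_def)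
  moreover have "finite S1" "finite S2" using fin by (auto simp: S1_def S2_def S_def)
  ultimately have "card ({u..v} \<inter> L) \<le> card S1" "card ({u<..<v} \<inter> L) \<le> card S2"
    by (auto intro: surj_card_le)
  moreover have "card S = card S1 + card S2"
    using fin unfolding S1_def S2_def S_def by (rule card_Int_Diff)
  ultimately show ?thesis by (simp add: S_def)
qed

section \<open>Closed curves in the punctured disc\<close>

lemma loop_path_in_DD:
  assumes "c ` sphere 0 1 \<subseteq> DD"
  shows "loop_path c t \<in> DD"
  using assms by (auto simp: loop_path_def)

lemma continuous_on_loop_path:
  assumes "continuous_on (sphere 0 1) c"
  shows "continuous_on {0..1} (loop_path c)"
  unfolding loop_path_def
  by (rule continuous_on_compose2[OF assms]) (auto intro!: continuous_intros)

lemma Wd_ge_card: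
  assumes "S \<subseteq> {z \<in> sphere 0 1. c z \<in> branch}"
  shows "enat (card S) \<le> Wd c"
proof (cases "finite {z \<in> sphere 0 1. c z \<in> branch}")
  case True
  then show ?thesis using card_mono[OF True assms] by (simp add: Wd_def)
next
  case False
  then show ?thesis by (simp add: Wd_def)
qed

lemma Wd_le_card:
  assumes inj: "inj_on h {z \<in> sphere 0 1. c z \<in> branch}"
    and into: "h ` {z \<in> sphere 0 1. c z \<in> branch} \<subseteq> P" and "finite P"
  shows "Wd c \<le> enat (card P)"
proof -
  let ?Z = "{z \<in> sphere 0 1. c z \<in> branch}"
  have "finite (h ` ?Z)" using into \<open>finite P\<close> by (rule finite_subset)
  then have "finite ?Z" using inj by (rule finite_imageD)
  moreover have "card ?Z \<le> card P"
    using card_inj_on_le[OF inj into \<open>finite P\<close>] .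
  ultimately show ?thesis by (simp add: Wd_def)
qed

lemma rotate_sphere_image:
  assumes "cmod \<omega> = 1"
  shows "(\<lambda>z. z * \<omega>) ` sphere 0 1 = sphere 0 1"
proof
  show "(\<lambda>z. z * \<omega>) ` sphere 0 1 \<subseteq> sphere 0 1" using assms by (auto simp: norm_mult)
  show "sphere 0 1 \<subseteq> (\<lambda>z. z * \<omega>) ` sphere 0 1"
  proof
    fix z :: complex assume "z \<in> sphere 0 1"
    moreover have "z = z / \<omega> * \<omega>" using assms by auto
    ultimately show "z \<in> (\<lambda>z. z * \<omega>) ` sphere 0 1"
      using assms by (intro image_eqI[of _ _ "z / \<omega>"]) (auto simp: norm_divide)
  qed
qed

lemma rotated_curve_image:
  "cmod \<omega> = 1 \<Longrightarrow> (\<lambda>z. c (z * \<omega>)) ` sphere 0 1 = c ` sphere 0 1"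
  using rotate_sphere_image[of \<omega>] by (metis image_image)

lemma continuous_on_rotated_curve:
  assumes "continuous_on (sphere 0 1) c" and "cmod \<omega> = 1"
  shows "continuous_on (sphere 0 1) (\<lambda>z. c (z * \<omega>))"
  by (rule continuous_on_compose2[OF assms(1)])
     (use rotate_sphere_image[OF assms(2)] in \<open>auto intro!: continuous_intros\<close>)

lemma embedded_rotated_curve:
  assumes "embedded c" and "cmod \<omega> = 1"
  shows "embedded (\<lambda>z. c (z * \<omega>))"
proof -
  have "inj_on (\<lambda>z. z * \<omega>) (sphere 0 1)" using assms(2) by (auto simp: inj_on_def)
  then show ?thesis
    using assms comp_inj_on[of "\<lambda>z. z * \<omega>" "sphere 0 1" c]
    by (simp add: embedded_def rotate_sphere_image o_def)
qed

lemma Wd_rotated_curve: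
  assumes "cmod \<omega> = 1"
  shows "Wd (\<lambda>z. c (z * \<omega>)) = Wd c"
proof -
  have "bij_betw (\<lambda>z. z * \<omega>) {z \<in> sphere 0 1. c (z * \<omega>) \<in> branch} {z \<in> sphere 0 1. c z \<in> branch}"
    unfolding bij_betw_def
  proof
    show "inj_on (\<lambda>z. z * \<omega>) {z \<in> sphere 0 1. c (z * \<omega>) \<in> branch}"
      using assms by (auto simp: inj_on_def)
    show "(\<lambda>z. z * \<omega>) ` {z \<in> sphere 0 1. c (z * \<omega>) \<in> branch} = {z \<in> sphere 0 1. c z \<in> branch}"
    proof (intro equalityI subsetI)
      fix z assume "z \<in> {z \<in> sphere 0 1. c z \<in> branch}"
      moreover have "z = z / \<omega> * \<omega>" using assms by auto
      ultimately show "z \<in> (\<lambda>z. z * \<omega>) ` {z \<in> sphere 0 1. c (z * \<omega>) \<in> branch}"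
        using assms by (intro image_eqI[of _ _ "z / \<omega>"]) (auto simp: norm_divide)
    qed (use assms in \<open>auto simp: norm_mult\<close>)
  qed
  then show ?thesis by (simp add: Wd_def bij_betw_finite bij_betw_same_card)
qed

lemma cycle_rel_rotated_curve:
  assumes cont: "continuous_on (sphere 0 1) c" and img: "c ` sphere 0 1 \<subseteq> DD"
    and visit: "\<forall>j<J. loop_path c (s j) = q j"
    and order: "\<forall>i j. i < j \<and> j < J \<longrightarrow> frac (s i - \<tau>) < frac (s j - \<tau>)"
  shows "cycle_rel q J (\<lambda>z. c (z * cis (2 * pi * \<tau>)))"
  unfolding cycle_rel_def
proof (intro conjI exI[of _ "\<lambda>j. frac (s j - \<tau>)"])
  show "continuous_on (sphere 0 1) (\<lambda>z. c (z * cis (2 * pi * \<tau>)))"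
    using cont by (rule continuous_on_rotated_curve) simp
  show "(\<lambda>z. c (z * cis (2 * pi * \<tau>))) ` sphere 0 1 \<subseteq> DD"
    using img rotated_curve_image[of "cis (2 * pi * \<tau>)" c] by simp
  have "loop_path (\<lambda>z. c (z * cis (2 * pi * \<tau>))) (frac (s j - \<tau>)) =
        c (cis (2 * pi * (s j - \<tau>)) * cis (2 * pi * \<tau>))" for j
    by (simp add: loop_path_def cis_2pi_frac)
  also have "\<dots> j = loop_path c (s j)" for j
    by (simp add: loop_path_def cis_mult algebra_simps)
  finally have "loop_path (\<lambda>z. c (z * cis (2 * pi * \<tau>))) (frac (s j - \<tau>)) = loop_path c (s j)" for j .
  then show "\<forall>j<J. 0 \<le> frac (s j - \<tau>) \<and> frac (s j - \<tau>) < 1 \<and>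
      loop_path (\<lambda>z. c (z * cis (2 * pi * \<tau>))) (frac (s j - \<tau>)) = q j"
    using visit by (simp add: frac_lt_1)
qed (use order in blast)

lemma winding_eq_0_if_halfplane:
  assumes cont: "continuous_on (sphere 0 1) c" and half: "\<forall>z\<in>sphere 0 1. 0 < u \<bullet> c z"
  shows "winding c = 0"
  unfolding winding_def
proof (rule winding_number_zero_outside)
  show "path (loop_path c)" using continuous_on_loop_path[OF cont] by (simp add: path_def)
  show "convex {z. 0 < u \<bullet> z}" using convex_halfspace_gt[of 0 u] by simp
  show "pathfinish (loop_path c) = pathstart (loop_path c)"
    by (simp add: pathfinish_def pathstart_def loop_path_def)
  show "0 \<notin> {z. 0 < u \<bullet> z}" by simp
  show "path_image (loop_path c) \<subseteq> {z. 0 < u \<bullet> z}"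
    using half by (auto simp: path_image_def loop_path_def)
qed

section \<open>Gap angles\<close>

lemma ccw_angle_bounds: "0 < ccw_angle a b" "ccw_angle a b \<le> 2 * pi"
  using Arg_bounded[of a] Arg_bounded[of b] by (auto simp: ccw_angle_def Let_def)

lemma ccw_angle_rotates:
  assumes "cmod a = 1" and "cmod b = 1"
  shows "b = a * cis (ccw_angle a b)"
proof -
  have "cis (ccw_angle a b) = cis (Arg b - Arg a)"
    by (auto simp: ccw_angle_def Let_def simp flip: cis_mult)
  then have "a * cis (ccw_angle a b) = cis (Arg a) * cis (Arg b - Arg a)"
    using cis_Arg_unit[OF assms(1)] by simp
  also have "\<dots> = b" using cis_Arg_unit[OF assms(2)] by (simp add: cis_mult)
  finally show ?thesis ..
qed

lemma ccw_angle_cis_ge: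
  assumes "b \<le> a"
  shows "2 * pi - (a - b) \<le> ccw_angle (cis a) (cis b)"
proof -
  define g where "g = ccw_angle (cis a) (cis b)"
  have "cis b = cis (a + g)" using ccw_angle_rotates[of "cis a" "cis b"] by (simp add: g_def cis_mult)
  then obtain n :: int where n: "b = a + g + 2 * pi * of_int n" using cis_eq_cisD by blast
  have "0 < g" using ccw_angle_bounds by (simp add: g_def)
  with n assms have "2 * pi * of_int n < 0" by linarith
  then have "of_int n \<le> (-1::real)" by (simp add: mult_less_0_iff)
  then have "2 * pi * of_int n \<le> 2 * pi * (-1)" by (intro mult_left_mono) auto
  with n show ?thesis by (simp add: g_def)
qed

lemma gap_angle_rotates:
  assumes qs: "\<forall>j<J. q j \<in> sphere 0 1" and "j < J"
  shows "q (Suc j mod J) = q j * cis (gap_angle q J j)"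
  using assms ccw_angle_rotates by (simp add: gap_angle_def)

lemma gap_angle_after_max:
  assumes "i < J" and angles: "\<forall>j<J. q j = cis (x j) \<and> x j \<le> x i"
  shows "2 * pi - (x i - x (Suc i mod J)) \<le> gap_angle q J i"
proof -
  have "Suc i mod J < J" using assms(1) by simp
  then have "2 * pi - (x i - x (Suc i mod J)) \<le> ccw_angle (cis (x i)) (cis (x (Suc i mod J)))"
    using angles by (intro ccw_angle_cis_ge) auto
  also have "\<dots> = gap_angle q J i" using angles assms(1) \<open>Suc i mod J < J\<close> by (simp add: gap_angle_def)
  finally show ?thesis .
qed

lemma big_gap_unique:
  assumes sum: "(\<Sum>j<J. gap_angle q J j) = 2 * pi"
    and "i < J" "k < J" "pi < gap_angle q J i" "pi < gap_angle q J k"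
  shows "i = k"
proof (rule ccontr)
  assume "i \<noteq> k"
  then have "(\<Sum>j\<in>{i, k}. gap_angle q J j) \<le> (\<Sum>j<J. gap_angle q J j)"
    by (intro sum_mono2) (use assms ccw_angle_bounds in \<open>auto simp: gap_angle_def less_imp_le\<close>)
  with \<open>i \<noteq> k\<close> assms show False by simp
qed

definition gap_position :: "(nat \<Rightarrow> complex) \<Rightarrow> nat \<Rightarrow> nat \<Rightarrow> real" where
  "gap_position q J j = (\<Sum>i<j. gap_angle q J i)"

lemma gap_position_rotates:
  assumes qs: "\<forall>j<J. q j \<in> sphere 0 1"
  shows "j < J \<Longrightarrow> q j = q 0 * cis (gap_position q J j)"
proof (induction j)
  case 0
  then show ?case by (simp add: gap_position_def)
next
  case (Suc j)
  then have "q (Suc j) = q j * cis (gap_angle q J j)"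
    using gap_angle_rotates[OF qs, of j] by simp
  with Suc show ?case by (simp add: gap_position_def mult.assoc cis_mult)
qed

lemma gap_position_strict_mono:
  assumes "i < j"
  shows "gap_position q J i < gap_position q J j"
proof -
  have "gap_position q J j = gap_position q J i + (\<Sum>k\<in>{i..<j}. gap_angle q J k)"
    using assms by (simp add: gap_position_def lessThan_atLeast0 sum.atLeastLessThan_concat)
  moreover have "0 < (\<Sum>k\<in>{i..<j}. gap_angle q J k)"
    using assms ccw_angle_bounds by (intro sum_pos) (auto simp: gap_angle_def)
  ultimately show ?thesis by simp
qed

lemma gap_position_mono: "i \<le> j \<Longrightarrow> gap_position q J i \<le> gap_position q J j"
  using gap_position_strict_mono[of i j q J] by (cases "i = j") auto

lemma gap_position_bounds:
  assumes sum: "(\<Sum>j<J. gap_angle q J j) = 2 * pi" and "j < J"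
  shows "0 \<le> gap_position q J j" "gap_position q J j < 2 * pi"
  using gap_position_mono[of 0 j q J] gap_position_strict_mono[of j J q J] assms
  by (simp_all add: gap_position_def)

definition complement_sweep_cost :: "(nat \<Rightarrow> complex) \<Rightarrow> nat \<Rightarrow> nat \<Rightarrow> nat" where
  "complement_sweep_cost q J i = sweep_cost (Arg (q i) - (2 * pi - gap_angle q J i)) (Arg (q i))"

lemma complement_sweep_cost_eq:
  assumes "cis B = q i"
  shows "complement_sweep_cost q J i = sweep_cost (B - (2 * pi - gap_angle q J i)) B"
proof -
  have "cmod (q i) = 1" using assms by (metis norm_cis)
  then have "cis (Arg (q i)) = cis B" using assms cis_Arg_unit by simp
  then obtain n :: int where "Arg (q i) = B + 2 * pi * of_int n" using cis_eq_cisD by blast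
  then show ?thesis
    using sweep_cost_shift[of "B - (2 * pi - gap_angle q J i)" n B]
    by (simp add: complement_sweep_cost_def algebra_simps)
qed

lemma complement_sweep_cost_le_6:
  "pi < gap_angle q J i \<Longrightarrow> complement_sweep_cost q J i \<le> 6"
  by (simp add: complement_sweep_cost_def sweep_cost_le_6)

section \<open>Lower bound for the cost\<close>

definition closed_angle_lift :: "(complex \<Rightarrow> complex) \<Rightarrow> (real \<Rightarrow> real) \<Rightarrow> bool" where
  "closed_angle_lift c \<theta> \<longleftrightarrow> continuous_on {0..1} \<theta> \<and> \<theta> 0 = \<theta> 1 \<and>
     (\<forall>t\<in>{0..1}. loop_path c t = of_real (cmod (loop_path c t)) * cis (\<theta> t))"

lemma closed_angle_lift_exists:
  assumes cont: "continuous_on (sphere 0 1) c" and img: "c ` sphere 0 1 \<subseteq> DD"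
    and miss: "\<And>z r. z \<in> sphere 0 1 \<Longrightarrow> 0 < r \<Longrightarrow> c z \<noteq> of_real r * cis \<phi>"
  shows "\<exists>\<theta>. closed_angle_lift c \<theta>"
proof -
  \<comment> \<open>Rotate the missed ray onto the negative real axis, where \<open>Arg\<close> is discontinuous.\<close>
  define w where "w t = loop_path c t * cis (- (\<phi> + pi))" for t
  have rotate_back: "loop_path c t = w t * cis (\<phi> + pi)" for t
    unfolding w_def mult.assoc cis_mult by simp
  have w_slit: "w t \<notin> \<real>\<^sub>\<le>\<^sub>0" for t
  proof
    assume "w t \<in> \<real>\<^sub>\<le>\<^sub>0"
    then obtain x where x: "x \<le> 0" "w t = of_real x" by (auto elim: nonpos_Reals_cases)
    have "loop_path c t \<noteq> 0" using loop_path_in_DD[OF img] by (auto simp: DD_def)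
    with x rotate_back have "x < 0" by fastforce
    moreover have "c (cis (2 * pi * t)) = of_real (- x) * cis \<phi>"
      using rotate_back[of t] x by (simp add: loop_path_def flip: minus_cis)
    ultimately show False using miss[of "cis (2 * pi * t)" "- x"] by simp
  qed
  define \<theta> where "\<theta> t = \<phi> + pi + Arg (w t)" for t
  have "continuous_on {0..1} \<theta>"
    unfolding \<theta>_def w_def using w_slit[unfolded w_def]
    by (intro continuous_intros continuous_on_loop_path[OF cont]) auto
  moreover have "\<theta> 0 = \<theta> 1" by (simp add: \<theta>_def w_def loop_path_def)
  moreover have "loop_path c t = of_real (cmod (loop_path c t)) * cis (\<theta> t)" for t
  proof -
    have "w t = of_real (cmod (w t)) * cis (Arg (w t))"
      using rcis_cmod_Arg[of "w t"] by (simp add: rcis_def)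
    moreover have "cmod (w t) = cmod (loop_path c t)" by (simp add: w_def norm_mult)
    ultimately show ?thesis
      by (simp add: rotate_back \<theta>_def mult.assoc add.commute flip: cis_mult)
  qed
  ultimately show ?thesis by (auto simp: closed_angle_lift_def)
qed

lemma Wd_ge_sweep_cost:
  assumes img: "c ` sphere 0 1 \<subseteq> DD" and lift: "closed_angle_lift c \<theta>"
    and ta: "ta \<in> {0..<1}" and tb: "tb \<in> {0..<1}" and le: "\<theta> ta \<le> \<theta> tb"
  shows "enat (sweep_cost (\<theta> ta) (\<theta> tb)) \<le> Wd c"
proof -
  define T where "T = {t \<in> {0..<1}. \<theta> t \<in> ray_angles}"
  define Z where "Z = {z \<in> sphere 0 1. c z \<in> branch}"
  define e where "e t = cis (2 * pi * t)" for t
  have inj: "inj_on e T"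
    unfolding e_def using inj_on_cis_2pi by (rule inj_on_subset) (auto simp: T_def)
  have "e ` T \<subseteq> Z"
  proof
    fix z assume "z \<in> e ` T"
    then obtain t where t: "t \<in> T" "z = e t" by blast
    have "loop_path c t \<in> DD" using loop_path_in_DD[OF img] .
    moreover have "loop_path c t = of_real (cmod (loop_path c t)) * cis (\<theta> t)"
      using lift t by (auto simp: closed_angle_lift_def T_def)
    ultimately have "loop_path c t \<in> branch"
      using mem_branch_iff[of "loop_path c t" "cmod (loop_path c t)" "\<theta> t"] t(1)
      by (auto simp: DD_def T_def)
    then show "z \<in> Z" using t by (simp add: Z_def e_def loop_path_def)
  qed
  show ?thesis
  proof (cases "finite Z")
    case True
    then have "finite T" using \<open>e ` T \<subseteq> Z\<close> inj finite_imageD finite_subset by blast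
    have "sweep_cost (\<theta> ta) (\<theta> tb) \<le> card T"
      unfolding sweep_cost_def T_def
      by (rule closed_curve_level_crossings[of \<theta> "min ta tb" "max ta tb"])
         (use lift ta tb le \<open>finite T\<close> in \<open>auto simp: closed_angle_lift_def T_def min_def max_def\<close>)
    also have "\<dots> = card (e ` T)" using inj by (simp add: card_image)
    also have "\<dots> \<le> card Z" using True \<open>e ` T \<subseteq> Z\<close> by (rule card_mono)
    finally show ?thesis using True by (simp add: Wd_def Z_def)
  next
    case False
    then show ?thesis by (simp add: Wd_def Z_def)
  qed
qed

lemma Wd_ge_6_if_all_rays_hit:
  assumes img: "c ` sphere 0 1 \<subseteq> DD"
    and hit: "\<forall>n\<in>{0..<6::int}. \<exists>z\<in>sphere 0 1. \<exists>r>0. c z = of_real r * cis (of_int n * pi / 3)"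
  shows "6 \<le> Wd c"
proof -
  obtain z r where zr: "\<forall>n\<in>{0..<6::int}.
      z n \<in> sphere 0 1 \<and> 0 < r n \<and> c (z n) = of_real (r n) * cis (of_int n * pi / 3)"
    using hit by metis
  have "inj_on z {0..<6}"
  proof (rule inj_onI)
    fix n m :: int assume n: "n \<in> {0..<6}" and m: "m \<in> {0..<6}" and "z n = z m"
    have sgn_ray: "sgn (c (z k)) = cis (of_int k * pi / 3)" if "k \<in> {0..<6}" for k
      using zr that by (simp add: sgn_mult sgn_of_real)
    have "cis (of_int n * pi / 3) = sgn (c (z n))" using sgn_ray[OF n] by simp
    also have "\<dots> = cis (of_int m * pi / 3)" using sgn_ray[OF m] \<open>z n = z m\<close> by simp
    finally have "cis (of_int n * pi / 3) = cis (of_int m * pi / 3)" .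
    moreover have "\<bar>of_int n * pi / 3 - of_int m * pi / 3\<bar> < 2 * pi"
    proof -
      have "\<bar>of_int n - of_int m\<bar> * pi \<le> 5 * pi"
        using n m by (intro mult_right_mono) auto
      then show ?thesis by (simp add: abs_mult flip: diff_divide_distrib left_diff_distrib)
    qed
    ultimately show "n = m" by (auto dest: cis_eq_cis_imp_eq)
  qed
  moreover have "z ` {0..<6} \<subseteq> {w \<in> sphere 0 1. c w \<in> branch}"
    using zr img by (force simp: branch_def)
  ultimately show ?thesis
    using Wd_ge_card[of "z ` {0..<6}" c] by (simp add: card_image numeral_eq_enat)
qed

lemma lifted_cycle_sweep_bound:
  assumes qs: "\<forall>j<J. q j \<in> sphere 0 1" and J: "J \<ge> 1"
    and cyc: "cycle_rel q J c" and lift: "closed_angle_lift c \<theta>"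
  shows "\<exists>i<J. \<exists>lo hi. cis hi = q i \<and> 2 * pi - gap_angle q J i \<le> hi - lo \<and>
           enat (sweep_cost lo hi) \<le> Wd c"
proof -
  have img: "c ` sphere 0 1 \<subseteq> DD" using cyc by (simp add: cycle_rel_def)
  obtain t where t: "\<forall>j<J. 0 \<le> t j \<and> t j < 1 \<and> loop_path c (t j) = q j"
    using cyc by (auto simp: cycle_rel_def)
  define x where "x j = \<theta> (t j)" for j
  have qx: "q j = cis (x j)" if "j < J" for j
  proof -
    have lp: "loop_path c (t j) = q j" "t j \<in> {0..1}" using t that by auto
    then have "q j = of_real (cmod (q j)) * cis (x j)"
      using lift unfolding closed_angle_lift_def x_def by metis
    moreover have "cmod (q j) = 1" using qs that by simp
    ultimately show ?thesis by (simp only: of_real_1 mult_1)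
  qed
  have "0 \<in> {..<J}" using J by simp
  then have fin: "finite (x ` {..<J})" "x ` {..<J} \<noteq> {}" by auto
  obtain l where l: "l < J" "x l = Min (x ` {..<J})" using Min_in[OF fin] by auto
  obtain i where i: "i < J" "x i = Max (x ` {..<J})" using Max_in[OF fin] by auto
  have bounds: "x l \<le> x j" "x j \<le> x i" if "j < J" for j
    using l i that fin by auto
  have "enat (sweep_cost (x l) (x i)) \<le> Wd c"
    using Wd_ge_sweep_cost[OF img lift, of "t l" "t i"] t l(1) i(1) bounds[OF i(1)]
    by (simp add: x_def)
  moreover have "2 * pi - gap_angle q J i \<le> x i - x l"
  proof -
    have "x l \<le> x (Suc i mod J)" using bounds J by simp
    moreover have "2 * pi - (x i - x (Suc i mod J)) \<le> gap_angle q J i"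
      using i(1) qx bounds by (intro gap_angle_after_max) auto
    ultimately show ?thesis by linarith
  qed
  moreover have "cis (x i) = q i" using qx[OF i(1)] ..
  ultimately show ?thesis using i(1) by blast
qed

lemma Wd_lower_bound:
  assumes qs: "\<forall>j<J. q j \<in> sphere 0 1" and J: "J \<ge> 1" and cyc: "cycle_rel q J c"
  shows "6 \<le> Wd c \<or> (\<exists>i<J. pi < gap_angle q J i \<and> enat (complement_sweep_cost q J i) \<le> Wd c)"
proof (cases "\<forall>n\<in>{0..<6::int}. \<exists>z\<in>sphere 0 1. \<exists>r>0. c z = of_real r * cis (of_int n * pi / 3)")
  case True
  then show ?thesis using Wd_ge_6_if_all_rays_hit cyc by (auto simp: cycle_rel_def)
next
  case False
  then obtain \<phi> where miss: "\<And>z r. z \<in> sphere 0 1 \<Longrightarrow> 0 < r \<Longrightarrow> c z \<noteq> of_real r * cis \<phi>"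
    by blast
  have "\<exists>\<theta>. closed_angle_lift c \<theta>"
    by (rule closed_angle_lift_exists[where \<phi> = \<phi>]) (use cyc miss in \<open>auto simp: cycle_rel_def\<close>)
  then obtain \<theta> where "closed_angle_lift c \<theta>" ..
  then obtain i lo hi where i: "i < J" "cis hi = q i"
    and gap: "2 * pi - gap_angle q J i \<le> hi - lo" and cost: "enat (sweep_cost lo hi) \<le> Wd c"
    using lifted_cycle_sweep_bound[OF qs J cyc] by blast
  show ?thesis
  proof (cases "pi \<le> hi - lo")
    case True
    then have "(6::enat) \<le> enat (sweep_cost lo hi)"
      using sweep_cost_ge_6 by (simp add: numeral_eq_enat)
    then have "6 \<le> Wd c" using cost by (rule order_trans)
    then show ?thesis ..
  next
    case False
    have "complement_sweep_cost q J i = sweep_cost (hi - (2 * pi - gap_angle q J i)) hi"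
      using i(2) by (rule complement_sweep_cost_eq)
    also have "\<dots> \<le> sweep_cost lo hi" using gap by (intro sweep_cost_antimono) linarith
    finally have "enat (complement_sweep_cost q J i) \<le> Wd c"
      using cost by (meson enat_ord_simps(1) order_trans)
    moreover have "pi < gap_angle q J i" using gap False by linarith
    ultimately show ?thesis using i(1) by blast
  qed
qed

lemma Wd_ge_complement_sweep_cost:
  assumes qs: "\<forall>j<J. q j \<in> sphere 0 1" and J: "J \<ge> 1"
    and sum: "(\<Sum>j<J. gap_angle q J j) = 2 * pi"
    and k: "k < J" "pi < gap_angle q J k" and cyc: "cycle_rel q J c"
  shows "enat (complement_sweep_cost q J k) \<le> Wd c"
  using Wd_lower_bound[OF qs J cyc]
proof
  assume "6 \<le> Wd c"
  moreover have "enat (complement_sweep_cost q J k) \<le> 6"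
    using complement_sweep_cost_le_6[OF k(2)] by (simp add: numeral_eq_enat)
  ultimately show ?thesis by simp
next
  assume "\<exists>i<J. pi < gap_angle q J i \<and> enat (complement_sweep_cost q J i) \<le> Wd c"
  with big_gap_unique[OF sum _ k(1) _ k(2)] show ?thesis by blast
qed

lemma Wd_ge_6_if_no_big_gap:
  assumes qs: "\<forall>j<J. q j \<in> sphere 0 1" and J: "J \<ge> 1"
    and no_big_gap: "\<forall>j<J. gap_angle q J j \<le> pi" and cyc: "cycle_rel q J c"
  shows "6 \<le> Wd c"
  using Wd_lower_bound[OF qs J cyc] no_big_gap by force

section \<open>The unit circle\<close>

lemma branch_inter_sphere: "branch \<inter> sphere 0 1 \<subseteq> (\<lambda>n. cis (of_int n * pi / 3)) ` {0..<6}"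
proof
  fix z assume "z \<in> branch \<inter> sphere 0 1"
  then obtain n :: int and r where z: "cmod z = 1" "0 < r" "z = of_real r * cis (of_int n * pi / 3)"
    by (auto simp: branch_def)
  then have "r = 1" by (simp add: norm_mult)
  have "real_of_int n = of_int (n mod 6) + 6 * of_int (n div 6)"
    by (metis mod_mult_div_eq of_int_add of_int_mult of_int_numeral)
  then have "of_int n * pi / 3 = of_int (n mod 6) * pi / 3 + 2 * pi * of_int (n div 6)"
    by (simp add: field_simps)
  then have "cis (of_int n * pi / 3) = cis (of_int (n mod 6) * pi / 3) * cis (2 * pi * of_int (n div 6))"
    by (simp only: cis_mult)
  then have "z = cis (of_int (n mod 6) * pi / 3)" using z \<open>r = 1\<close> by simp
  then show "z \<in> (\<lambda>n. cis (of_int n * pi / 3)) ` {0..<6}" by force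
qed

lemma winding_number_rotated_circle:
  assumes "cmod u = 1"
  shows "winding_number (\<lambda>t. u * cis (2 * pi * t)) 0 = 1"
proof -
  define s where "s = frac (Arg u / (2 * pi))"
  have s: "s \<in> {0..1}" using less_imp_le[OF frac_lt_1] by (simp add: s_def)
  have u: "cis (2 * pi * s) = u"
    using cis_2pi_frac cis_Arg_unit[OF assms] by (simp add: s_def)
  have circ: "circlepath 0 1 = (\<lambda>t. cis (2 * pi * t))"
    by (auto simp: circlepath cis_conv_exp algebra_simps)
  have "shiftpath s (circlepath 0 1) = (\<lambda>t. u * cis (2 * pi * t))"
  proof
    fix t
    have "cis (2 * pi * (s + t)) = u * cis (2 * pi * t)"
      using u by (simp add: distrib_left flip: cis_mult)
    moreover have "cis (2 * pi * (s + t - 1)) = cis (2 * pi * (s + t))"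
      by (simp add: right_diff_distrib flip: cis_divide)
    ultimately show "shiftpath s (circlepath 0 1) t = u * cis (2 * pi * t)"
      by (simp add: shiftpath_def circ)
  qed
  then show ?thesis
    using winding_number_shiftpath[of "circlepath 0 1" 0 s] s winding_number_circlepath_centre[of 1 0]
    by simp
qed

lemma unit_circle_cycle:
  assumes qs: "\<forall>j<J. q j \<in> sphere 0 1" and J: "J \<ge> 1"
    and sum: "(\<Sum>j<J. gap_angle q J j) = 2 * pi"
  shows "\<exists>c. cycle_rel q J c \<and> embedded c \<and> winding c = 1 \<and> Wd c \<le> 6"
proof (intro exI conjI)
  let ?c = "\<lambda>z. q 0 * z"
  have q0: "cmod (q 0) = 1" using qs J by auto
  show "cycle_rel q J ?c"
    unfolding cycle_rel_def
  proof (intro conjI exI[of _ "\<lambda>j. gap_position q J j / (2 * pi)"] allI impI)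
    show "continuous_on (sphere 0 1) ?c" by (intro continuous_intros)
    show "?c ` sphere 0 1 \<subseteq> DD" using q0 by (auto simp: DD_def norm_mult)
    fix j assume j: "j < J"
    show "0 \<le> gap_position q J j / (2 * pi)" "gap_position q J j / (2 * pi) < 1"
      using gap_position_bounds[OF sum j] by simp_all
    show "loop_path ?c (gap_position q J j / (2 * pi)) = q j"
      using gap_position_rotates[OF qs j] by (simp add: loop_path_def)
  next
    fix i j assume "i < j \<and> j < J"
    then show "gap_position q J i / (2 * pi) < gap_position q J j / (2 * pi)"
      by (simp add: gap_position_strict_mono divide_strict_right_mono)
  qed
  show "embedded ?c" using q0 by (auto simp: embedded_def inj_on_def)
  show "winding ?c = 1"
    using winding_number_rotated_circle[OF q0] by (simp add: winding_def loop_path_def[abs_def])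
  have "Wd ?c \<le> enat (card ((\<lambda>n. cis (of_int n * pi / 3)) ` {0..<6::int}))"
    using q0 branch_inter_sphere
    by (intro Wd_le_card[where h = ?c]) (auto simp: inj_on_def norm_mult)
  also have "\<dots> \<le> 6" using card_image_le[of "{0..<6::int}"] by (simp add: numeral_eq_enat)
  finally show "Wd ?c \<le> 6" .
qed

section \<open>The lens around the arc complementary to a big gap\<close>

(* The upper half of the unit circle is mapped onto the arc of angles [A, B], the lower half onto
   a return path through the same angles at radius 1 + Im w / 2. *)
definition lens_angle :: "real \<Rightarrow> real \<Rightarrow> complex \<Rightarrow> real" where
  "lens_angle A B w = A + (B - A) * (1 - Re w) / 2"

definition lens :: "real \<Rightarrow> real \<Rightarrow> complex \<Rightarrow> complex" where
  "lens A B w = rcis (1 + min 0 (Im w) / 2) (lens_angle A B w)"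

definition lens_time :: "real \<Rightarrow> real \<Rightarrow> real \<Rightarrow> real" where
  "lens_time A B a = arccos (1 - 2 * (a - A) / (B - A)) / (2 * pi)"

lemma lens_angle_bounds:
  assumes "cmod w = 1" and "A \<le> B"
  shows "A \<le> lens_angle A B w" "lens_angle A B w \<le> B"
proof -
  have "0 \<le> 1 - Re w" "1 - Re w \<le> 2" using unit_complex_Re_Im_bounds(2)[OF assms(1)] by auto
  then have "0 \<le> (B - A) * (1 - Re w)" "(B - A) * (1 - Re w) \<le> (B - A) * 2"
    using assms(2) by (simp, intro mult_left_mono) auto
  then show "A \<le> lens_angle A B w" "lens_angle A B w \<le> B" by (simp_all add: lens_angle_def)
qed

lemma lens_angle_strict_bounds:
  assumes "cmod w = 1" and "A < B" and "Im w \<noteq> 0"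
  shows "A < lens_angle A B w" "lens_angle A B w < B"
proof -
  have "0 < (Im w)\<^sup>2" using assms(3) by simp
  then have "(Re w)\<^sup>2 < 1" using unit_complex_Re_Im_bounds(1)[OF assms(1)] by linarith
  then have "0 < 1 - Re w" "1 - Re w < 2" by (auto simp: abs_square_less_1)
  then have "0 < (B - A) * (1 - Re w)" "(B - A) * (1 - Re w) < (B - A) * 2"
    using assms(2) by (simp, intro mult_strict_left_mono) auto
  then show "A < lens_angle A B w" "lens_angle A B w < B" by (simp_all add: lens_angle_def)
qed

lemma norm_lens:
  assumes "cmod w = 1"
  shows "cmod (lens A B w) = 1 + min 0 (Im w) / 2" "1 / 2 \<le> cmod (lens A B w)" "cmod (lens A B w) \<le> 1"
proof -
  have "\<bar>Im w\<bar> \<le> 1" using unit_complex_Re_Im_bounds(3)[OF assms] .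
  then have r: "1 / 2 \<le> 1 + min 0 (Im w) / 2" "1 + min 0 (Im w) / 2 \<le> 1" by auto
  then show norm: "cmod (lens A B w) = 1 + min 0 (Im w) / 2"
    unfolding lens_def complex_mod_rcis by simp
  with r show "1 / 2 \<le> cmod (lens A B w)" "cmod (lens A B w) \<le> 1" by simp_all
qed

lemma lens_in_DD:
  assumes "cmod w = 1"
  shows "lens A B w \<in> DD"
proof -
  have "0 < cmod (lens A B w)" using norm_lens(2)[OF assms, of A B] by linarith
  then show ?thesis using norm_lens(3)[OF assms] by (simp only: DD_def mem_Collect_eq)
qed

lemma continuous_on_lens: "continuous_on S (lens A B)"
  unfolding lens_def rcis_def lens_angle_def by (intro continuous_intros) auto

lemma lens_embedded:
  assumes "0 < B - A" and "B - A < 2 * pi"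
  shows "embedded (lens A B)"
  unfolding embedded_def
proof (rule inj_onI)
  fix w1 w2 assume w: "w1 \<in> sphere 0 1" "w2 \<in> sphere 0 1" and eq: "lens A B w1 = lens A B w2"
  then have w1: "cmod w1 = 1" and w2: "cmod w2 = 1" by auto
  have min_eq: "min 0 (Im w1) = min 0 (Im w2)"
    using arg_cong[OF eq, of cmod] norm_lens(1)[OF w1] norm_lens(1)[OF w2] by simp
  have "0 \<le> Im w1 * Im w2"
  proof (cases "0 \<le> Im w1")
    case True
    then have "0 \<le> Im w2" using min_eq by (simp add: min_def split: if_splits)
    with True show ?thesis by simp
  next
    case False
    then have "Im w2 = Im w1" using min_eq by (simp add: min_def split: if_splits)
    then show ?thesis by simp
  qed
  have "0 < 1 + min 0 (Im w) / 2" if "cmod w = 1" for w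
    using norm_lens[OF that, of A B] by simp
  then have "cis (lens_angle A B w) = sgn (lens A B w)" if "cmod w = 1" for w
    using that by (simp add: lens_def sgn_rcis)
  with w1 w2 eq have "cis (lens_angle A B w1) = cis (lens_angle A B w2)" by simp
  moreover have "\<bar>lens_angle A B w1 - lens_angle A B w2\<bar> < 2 * pi"
    using lens_angle_bounds[OF w1, of A B] lens_angle_bounds[OF w2, of A B] assms
    unfolding abs_less_iff by linarith
  ultimately have "lens_angle A B w1 = lens_angle A B w2" by (rule cis_eq_cis_imp_eq)
  then have "Re w1 = Re w2" using assms by (simp add: lens_angle_def)
  then show "w1 = w2" using unit_complex_eqI w1 w2 \<open>0 \<le> Im w1 * Im w2\<close> by blast
qed

lemma lens_winding_zero:
  assumes AB: "A \<le> B" "B - A < pi" and \<omega>: "cmod \<omega> = 1"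
  shows "winding (\<lambda>z. lens A B (z * \<omega>)) = 0"
proof (rule winding_eq_0_if_halfplane)
  show "continuous_on (sphere 0 1) (\<lambda>z. lens A B (z * \<omega>))"
    using continuous_on_lens \<omega> by (rule continuous_on_rotated_curve)
  show "\<forall>z\<in>sphere 0 1. 0 < cis ((A + B) / 2) \<bullet> lens A B (z * \<omega>)"
  proof
    fix z :: complex assume "z \<in> sphere 0 1"
    then have w: "cmod (z * \<omega>) = 1" using \<omega> by (simp add: norm_mult)
    define a where "a = lens_angle A B (z * \<omega>)"
    define r where "r = 1 + min 0 (Im (z * \<omega>)) / 2"
    have "cis ((A + B) / 2) \<bullet> lens A B (z * \<omega>) = r * cos (a - (A + B) / 2)"
      by (simp add: lens_def a_def r_def inner_complex_def cos_diff algebra_simps)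
    moreover have "0 < r" using norm_lens(1,2)[OF w, of A B] by (simp add: r_def)
    moreover have "0 < cos (a - (A + B) / 2)"
    proof (rule cos_gt_zero_pi)
      show "- (pi / 2) < a - (A + B) / 2" "a - (A + B) / 2 < pi / 2"
        using lens_angle_bounds[OF w AB(1)] AB(2) unfolding a_def by (simp_all add: field_simps)
    qed
    ultimately show "0 < cis ((A + B) / 2) \<bullet> lens A B (z * \<omega>)" by simp
  qed
qed

lemma Wd_lens_le:
  assumes AB: "0 < B - A" "B - A < 2 * pi"
  shows "Wd (lens A B) \<le> enat (sweep_cost A B)"
proof -
  let ?Z = "{w \<in> sphere 0 1. lens A B w \<in> branch}"
  define h where "h w = (if 0 < Im w then Inr (lens_angle A B w) else Inl (lens_angle A B w))" for w
  have hit: "lens_angle A B w \<in> ray_angles" if "w \<in> ?Z" for w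
  proof -
    have w: "cmod w = 1" using that by simp
    have "0 < 1 + min 0 (Im w) / 2" using norm_lens(1,2)[OF w, of A B] by simp
    moreover have "lens A B w = of_real (1 + min 0 (Im w) / 2) * cis (lens_angle A B w)"
      by (simp only: lens_def rcis_def)
    ultimately show ?thesis
      using that mem_branch_iff[OF lens_in_DD[OF w]] by blast
  qed
  have "inj_on h ?Z"
  proof (rule inj_onI)
    fix w1 w2 assume w1: "w1 \<in> ?Z" and w2: "w2 \<in> ?Z" and "h w1 = h w2"
    then have "lens_angle A B w1 = lens_angle A B w2" and sign: "0 < Im w1 \<longleftrightarrow> 0 < Im w2"
      by (auto simp: h_def split: if_splits)
    then have "Re w1 = Re w2" using AB by (simp add: lens_angle_def)
    moreover have "0 \<le> Im w1 * Im w2"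
      using sign by (cases "0 < Im w1") (auto intro: mult_nonpos_nonpos)
    ultimately show "w1 = w2" using unit_complex_eqI w1 w2 by auto
  qed
  moreover have "h ` ?Z \<subseteq> ({A..B} \<inter> ray_angles) <+> ({A<..<B} \<inter> ray_angles)"
  proof
    fix x assume "x \<in> h ` ?Z"
    then obtain w where w: "w \<in> ?Z" "x = h w" by blast
    then have "cmod w = 1" by simp
    then show "x \<in> ({A..B} \<inter> ray_angles) <+> ({A<..<B} \<inter> ray_angles)"
      using w hit[OF w(1)] lens_angle_bounds[of w A B] lens_angle_strict_bounds[of w A B] AB
      by (auto simp: h_def)
  qed
  moreover have "finite (({A..B} \<inter> ray_angles) <+> ({A<..<B} \<inter> ray_angles))"
    using finite_ray_angles_inter by simp
  ultimately have "Wd (lens A B) \<le> enat (card (({A..B} \<inter> ray_angles) <+> ({A<..<B} \<inter> ray_angles)))"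
    by (rule Wd_le_card)
  then show ?thesis using finite_ray_angles_inter by (simp add: card_Plus sweep_cost_def)
qed

lemma lens_time_bounds:
  assumes "A < B" and "A \<le> a" and "a \<le> B"
  shows "0 \<le> lens_time A B a" "lens_time A B a \<le> 1 / 2"
proof -
  have "-1 \<le> 1 - 2 * (a - A) / (B - A)" "1 - 2 * (a - A) / (B - A) \<le> 1"
    using assms by (simp_all add: field_simps)
  then show "0 \<le> lens_time A B a" "lens_time A B a \<le> 1 / 2"
    using arccos_bounded by (simp_all add: lens_time_def field_simps)
qed

lemma lens_time_strict_mono:
  assumes "A < B" and "A \<le> a" and "a < b" and "b \<le> B"
  shows "lens_time A B a < lens_time A B b"
proof -
  have "2 * (a - A) / (B - A) < 2 * (b - A) / (B - A)"
    using assms by (intro divide_strict_right_mono) auto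
  moreover have "-1 \<le> 1 - 2 * (b - A) / (B - A)" "1 - 2 * (a - A) / (B - A) \<le> 1"
    using assms by (simp_all add: field_simps)
  ultimately have "arccos (1 - 2 * (a - A) / (B - A)) < arccos (1 - 2 * (b - A) / (B - A))"
    by (intro arccos_less_arccos) auto
  then show ?thesis by (simp add: lens_time_def divide_strict_right_mono)
qed

lemma lens_visits:
  assumes "A < B" and "A \<le> a" and "a \<le> B"
  shows "loop_path (lens A B) (lens_time A B a) = cis a"
proof -
  define y where "y = 1 - 2 * (a - A) / (B - A)"
  have y: "-1 \<le> y" "y \<le> 1" using assms by (simp_all add: y_def field_simps)
  have "2 * pi * lens_time A B a = arccos y" by (simp add: lens_time_def y_def)
  moreover have "0 \<le> sin (arccos y)" using arccos_bounded[OF y] by (simp add: sin_ge_zero)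
  moreover have "A + (B - A) * (1 - y) / 2 = a" using assms by (simp add: y_def field_simps)
  ultimately show ?thesis
    using y by (simp add: loop_path_def lens_def lens_angle_def rcis_def)
qed

lemma frac_diff_cyclic_mono:
  fixes s :: "nat \<Rightarrow> real"
  assumes range: "\<forall>j<J. 0 \<le> s j \<and> s j \<le> 1 / 2" and k: "k < J"
    and incr: "\<forall>i j. i < j \<and> j < J \<and> (j \<le> k \<or> k < i) \<longrightarrow> s i < s j"
    and wrap: "\<forall>j. k < j \<and> j < J \<longrightarrow> s j < s 0"
    and ij: "i < j" "j < J"
  shows "frac (s i - s 0) < frac (s j - s 0)"
proof -
  have s0: "s 0 \<le> s l" if "l \<le> k" for l
    using incr[rule_format, of 0 l] that k by (cases "l = 0") (auto simp: less_imp_le)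
  have frac_s: "frac (s l - s 0) = (if s 0 \<le> s l then s l - s 0 else s l - s 0 + 1)" if "l < J" for l
    using range[rule_format, of l] range[rule_format, of 0] that k by (subst frac_eq_if_small) auto
  consider "j \<le> k" | "k < i" | "i \<le> k" "k < j" by linarith
  then show ?thesis
  proof cases
    case 1
    then show ?thesis using ij incr s0[of i] s0[of j] frac_s[of i] frac_s[of j] by auto
  next
    case 2
    then show ?thesis using ij incr wrap[rule_format, of i] wrap[rule_format, of j] frac_s[of i] frac_s[of j]
      by auto
  next
    case 3
    then show ?thesis
      using ij range[rule_format, of i] range[rule_format, of j] s0[of i] wrap frac_s[of i] frac_s[of j]
      by auto
  qed
qed

lemma lens_cycle:
  assumes AB: "A < B" and k: "k < J"
    and pts: "\<forall>j<J. q j = cis (a j) \<and> A \<le> a j \<and> a j \<le> B"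
    and incr: "\<forall>i j. i < j \<and> j < J \<and> (j \<le> k \<or> k < i) \<longrightarrow> a i < a j"
    and wrap: "\<forall>j. k < j \<and> j < J \<longrightarrow> a j < a 0"
  shows "cycle_rel q J (\<lambda>z. lens A B (z * cis (2 * pi * lens_time A B (a 0))))"
proof (rule cycle_rel_rotated_curve)
  define s where "s j = lens_time A B (a j)" for j
  have s_mono: "s i < s j" if "a i < a j" "i < J" "j < J" for i j
    using lens_time_strict_mono[OF AB] pts that by (simp add: s_def)
  show "continuous_on (sphere 0 1) (lens A B)" by (rule continuous_on_lens)
  show "lens A B ` sphere 0 1 \<subseteq> DD" using lens_in_DD by auto
  show "\<forall>j<J. loop_path (lens A B) (s j) = q j"
    using lens_visits[OF AB] pts by (simp add: s_def)
  show "\<forall>i j. i < j \<and> j < J \<longrightarrow> frac (s i - s 0) < frac (s j - s 0)"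
  proof (intro allI impI)
    fix i j assume "i < j \<and> j < J"
    moreover have "\<forall>j<J. 0 \<le> s j \<and> s j \<le> 1 / 2"
      using lens_time_bounds[OF AB] pts by (simp add: s_def)
    ultimately show "frac (s i - s 0) < frac (s j - s 0)"
      using k incr wrap s_mono by (intro frac_diff_cyclic_mono[where k = k]) auto
  qed
qed

lemma big_gap_arc_angles:
  assumes qs: "\<forall>j<J. q j \<in> sphere 0 1" and sum: "(\<Sum>j<J. gap_angle q J j) = 2 * pi"
    and k: "k < J" and B: "cis B = q k"
  shows "\<exists>a. (\<forall>j<J. q j = cis (a j) \<and> B - (2 * pi - gap_angle q J k) \<le> a j \<and> a j \<le> B) \<and>
             (\<forall>i j. i < j \<and> j < J \<and> (j \<le> k \<or> k < i) \<longrightarrow> a i < a j) \<and>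
             (\<forall>j. k < j \<and> j < J \<longrightarrow> a j < a 0)"
proof -
  define P where "P = gap_position q J"
  \<comment> \<open>B minus the counter-clockwise distance from q j to q k.\<close>
  define a where "a j = B - (if j \<le> k then P k - P j else P k - P j + 2 * pi)" for j
  have P_bounds: "0 \<le> P j" "P j < 2 * pi" if "j < J" for j
    using gap_position_bounds[OF sum that] by (simp_all add: P_def)
  have P_mono: "P i < P j" if "i < j" for i j
    using gap_position_strict_mono[OF that] by (simp add: P_def)
  have "P (Suc k) \<le> P J" using gap_position_mono[of "Suc k" J] k by (simp add: P_def)
  then have gap_k: "P k + gap_angle q J k \<le> 2 * pi"
    using sum by (simp add: P_def gap_position_def)
  have "q j = cis (a j)" if "j < J" for j
  proof -
    have "cis (a j) = cis (B - (P k - P j))"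
    proof (cases "j \<le> k")
      case False
      then have "cis (B - (P k - P j)) = cis (a j + 2 * pi)" by (simp add: a_def algebra_simps)
      also have "\<dots> = cis (a j)" by (simp flip: cis_mult)
      finally show ?thesis ..
    qed (simp add: a_def)
    also have "\<dots> = cis B * cis (P j - P k)" by (simp add: cis_mult algebra_simps)
    also have "\<dots> = q 0 * cis (P j)"
      using gap_position_rotates[OF qs k] B by (simp add: P_def mult.assoc cis_mult)
    also have "\<dots> = q j" using gap_position_rotates[OF qs that] by (simp add: P_def)
    finally show ?thesis ..
  qed
  moreover have "B - (2 * pi - gap_angle q J k) \<le> a j \<and> a j \<le> B" if "j < J" for j
  proof (cases "j \<le> k")
    case True
    then show ?thesis using P_bounds[OF that] P_bounds[OF k] P_mono[of j k] gap_k
      by (cases "j = k") (auto simp: a_def)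
  next
    case False
    then have "P (Suc k) \<le> P j" using P_mono[of "Suc k" j] by (cases "Suc k = j") auto
    then show ?thesis using False P_bounds[OF that] P_bounds[OF k]
      by (simp add: a_def P_def gap_position_def)
  qed
  moreover have "a i < a j" if "i < j" "j < J" "j \<le> k \<or> k < i" for i j
    using that P_mono[OF that(1)] by (auto simp: a_def)
  moreover have "a j < a 0" if "k < j" "j < J" for j
    using that P_bounds[OF that(2)] by (simp add: a_def P_def gap_position_def)
  ultimately show ?thesis by blast
qed

lemma sweep_cost_lower_end:
  assumes "0 \<le> L" and "L < pi"
  shows "\<exists>A. B - pi < A \<and> A < B \<and> A \<le> B - L \<and> sweep_cost A B \<le> sweep_cost (B - L) B"
proof (cases "L = 0")
  case True
  \<comment> \<open>The lens needs positive width: take A below B but above the preceding ray angle.\<close>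
  define y where "y = 3 * B / pi"
  define A where "A = (of_int \<lceil>y\<rceil> - 1 + y) / 2 * pi / 3"
  have A: "3 * A / pi = (of_int \<lceil>y\<rceil> - 1 + y) / 2" by (simp add: A_def)
  have y: "of_int \<lceil>y\<rceil> - 1 < y" "y \<le> of_int \<lceil>y\<rceil>" by linarith+
  then have x: "of_int \<lceil>y\<rceil> - 1 < 3 * A / pi" "3 * A / pi < y" "y - 3 * A / pi < 3"
    unfolding A by (simp_all add: field_simps del: le_of_int_ceiling)
  then have "\<lceil>3 * A / pi\<rceil> = \<lceil>y\<rceil>" "\<lfloor>3 * A / pi\<rfloor> = \<lceil>y\<rceil> - 1"
    using y by (auto intro!: ceiling_unique floor_unique simp del: le_of_int_ceiling)
  moreover have "\<lceil>y\<rceil> \<le> \<lfloor>y\<rfloor> + 1" by linarith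
  ultimately have "sweep_cost A B \<le> sweep_cost B B" by (simp add: sweep_cost_eq y_def)
  moreover have "B - pi < A" "A < B" using x by (simp_all add: y_def field_simps)
  ultimately show ?thesis using True by auto
next
  case False
  then show ?thesis using assms by (intro exI[of _ "B - L"]) auto
qed

lemma lens_cycle_at_big_gap:
  assumes qs: "\<forall>j<J. q j \<in> sphere 0 1" and sum: "(\<Sum>j<J. gap_angle q J j) = 2 * pi"
    and k: "k < J" and big: "pi < gap_angle q J k"
  shows "\<exists>c. cycle_rel q J c \<and> embedded c \<and> winding c = 0 \<and>
             Wd c \<le> enat (complement_sweep_cost q J k)"
proof -
  define L where "L = 2 * pi - gap_angle q J k"
  have L: "0 \<le> L" "L < pi" using ccw_angle_bounds big by (simp_all add: L_def gap_angle_def)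
  define B where "B = Arg (q k)"
  have B: "cis B = q k" using qs k cis_Arg_unit by (simp add: B_def)
  obtain A where A: "B - pi < A" "A < B" "A \<le> B - L" and cost: "sweep_cost A B \<le> sweep_cost (B - L) B"
    using sweep_cost_lower_end[OF L] by blast
  obtain a where pts: "\<forall>j<J. q j = cis (a j) \<and> B - L \<le> a j \<and> a j \<le> B"
    and order: "\<forall>i j. i < j \<and> j < J \<and> (j \<le> k \<or> k < i) \<longrightarrow> a i < a j"
      "\<forall>j. k < j \<and> j < J \<longrightarrow> a j < a 0"
    using big_gap_arc_angles[OF qs sum k B] unfolding L_def by blast
  define \<omega> where "\<omega> = cis (2 * pi * lens_time A B (a 0))"
  have \<omega>: "cmod \<omega> = 1" by (simp add: \<omega>_def)
  have "cycle_rel q J (\<lambda>z. lens A B (z * \<omega>))"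
    unfolding \<omega>_def using A(2) k _ order by (rule lens_cycle) (use pts A(3) in force)
  moreover have "embedded (\<lambda>z. lens A B (z * \<omega>))"
    using lens_embedded A \<omega> by (intro embedded_rotated_curve) auto
  moreover have "winding (\<lambda>z. lens A B (z * \<omega>)) = 0"
    using A \<omega> by (intro lens_winding_zero) auto
  moreover have "Wd (\<lambda>z. lens A B (z * \<omega>)) \<le> enat (complement_sweep_cost q J k)"
  proof -
    have "Wd (\<lambda>z. lens A B (z * \<omega>)) = Wd (lens A B)" using \<omega> by (rule Wd_rotated_curve)
    also have "\<dots> \<le> enat (sweep_cost A B)" using A by (intro Wd_lens_le) auto
    also have "\<dots> \<le> enat (complement_sweep_cost q J k)"
      using cost complement_sweep_cost_eq[of B q k J, OF B] by (simp add: L_def)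
    finally show ?thesis .
  qed
  ultimately show ?thesis by blast
qed

theorem mainTheorem8:
  fixes q :: "nat \<Rightarrow> complex" and J :: nat
  assumes "J \<ge> 1"
    and "\<forall>j<J. q j \<in> sphere 0 1"
    and "inj_on q {..<J}"
    and "(\<Sum>j<J. gap_angle q J j) = 2 * pi"
  shows "((\<exists>j<J. gap_angle q J j > pi) \<longrightarrow>
            (\<exists>c. Wd_minimizing q J c \<and> embedded c \<and> monotone_cycle q J c \<and> winding c = 0))
       \<and> ((\<not> (\<exists>j<J. gap_angle q J j > pi)) \<longrightarrow>
            (\<exists>c. Wd_minimizing q J c \<and> embedded c \<and> (winding c = 1 \<or> winding c = -1)))"
proof -
  note J = assms(1) and qs = assms(2) and sum = assms(4)
  show ?thesis
  proof (intro conjI impI)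
    assume "\<exists>j<J. gap_angle q J j > pi"
    then obtain k where k: "k < J" "pi < gap_angle q J k" by blast
    obtain c where c: "cycle_rel q J c" "embedded c" "winding c = 0"
      and cost: "Wd c \<le> enat (complement_sweep_cost q J k)"
      using lens_cycle_at_big_gap[OF qs sum k] by blast
    have "Wd c \<le> Wd c'" if "cycle_rel q J c'" for c'
      using cost Wd_ge_complement_sweep_cost[OF qs J sum k that] by (rule order_trans)
    with c sum show "\<exists>c. Wd_minimizing q J c \<and> embedded c \<and> monotone_cycle q J c \<and> winding c = 0"
      by (auto simp: Wd_minimizing_def monotone_cycle_def ccw_order_def)
  next
    assume "\<not> (\<exists>j<J. gap_angle q J j > pi)"
    then have no_big_gap: "\<forall>j<J. gap_angle q J j \<le> pi" by auto
    obtain c where c: "cycle_rel q J c" "embedded c" "winding c = 1" and cost: "Wd c \<le> 6"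
      using unit_circle_cycle[OF qs J sum] by blast
    have "Wd c \<le> Wd c'" if "cycle_rel q J c'" for c'
      using cost Wd_ge_6_if_no_big_gap[OF qs J no_big_gap that] by (rule order_trans)
    with c show "\<exists>c. Wd_minimizing q J c \<and> embedded c \<and> (winding c = 1 \<or> winding c = -1)"
      by (auto simp: Wd_minimizing_def)
  qed
qed

end
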